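(* Let $X$ be a compact metric space with metric $d$, let $0<L<1$, and let $f\colon X\to X$ be a continuous map which is chain transitive and has the $L$-Lipschitz shadowing property. Then $\mathcal{D}(f)$ is a finite set, and, writing $m=|\mathcal{D}(f)|$, each $D\in\mathcal{D}(f)$ satisfies $f^m(D)\subset D$ and $f^m|_D\colon D\to D$ (with the restricted metric) has the $L$-Lipschitz shadowing property.
   Context: For a continuous map $g\colon Y\to Y$ on a metric space $(Y,d)$ and $\delta>0$, a sequence $(x_i)_{i\ge0}$ is a $\delta$-pseudo orbit of $g$ if $d(g(x_i),x_{i+1})\le\delta$ for all $i\ge0$; it is $\epsilon$-shadowed by $y$ if $d(g^i(y),x_i)\le\epsilon$ for all $i\ge0$. $g$ has the $L$-Lipschitz shadowing property if there is $\delta_0>0$ such that for every $0<\delta\le\delta_0$, every $\delta$-pseudo orbit of $g$ is $L\delta$-shadowed by some point of $Y$. A $\delta$-chain of $f$ is a finite sequence $(x_i)_{i=0}^k$, $k\ge1$, with $d(f(x_i),x_{i+1})\le\delta$ for $0\le i\le k-1$; $k$ is its length; it is a $\delta$-cycle if $x_0=x_k$. $f$ is chain transitive if for all $x,y\in X$ and $\delta>0$ there is a $\delta$-chain with $x_0=x$, $x_k=y$. For chain transitive $f$ and $\delta>0$, let $m(\delta)$ be the greatest common divisor of the lengths of all $\delta$-cycles of $f$, and define $x\sim_\delta y$ iff there is a $\delta$-chain $(x_i)_{i=0}^k$ with $x_0=x$, $x_k=y$ and $m(\delta)\mid k$ (an equivalence relation on $X$). Define $x\sim y$ iff $x\sim_\delta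 y$ for every $\delta>0$; $\mathcal{D}(f)$ is the set of equivalence classes of $\sim$. *)

theory Defs
  imports "HOL-Analysis.Analysis"
begin

definition pseudo_orbit :: "'a::metric_space set \<Rightarrow> ('a \<Rightarrow> 'a) \<Rightarrow> real \<Rightarrow> (nat \<Rightarrow> 'a) \<Rightarrow> bool" where
  "pseudo_orbit Y g \<delta> x \<longleftrightarrow> (\<forall>i. x i \<in> Y) \<and> (\<forall>i. dist (g (x i)) (x (Suc i)) \<le> \<delta>)"

definition shadows :: "'a::metric_space set \<Rightarrow> ('a \<Rightarrow> 'a) \<Rightarrow> real \<Rightarrow> (nat \<Rightarrow> 'a) \<Rightarrow> 'a \<Rightarrow> bool" where
  "shadows Y g \<epsilon> x y \<longleftrightarrow> y \<in> Y \<and> (\<forall>i. dist ((g ^^ i) y) (x i) \<le> \<epsilon>)"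

definition lipschitz_shadowing :: "'a::metric_space set \<Rightarrow> ('a \<Rightarrow> 'a) \<Rightarrow> real \<Rightarrow> bool" where
  "lipschitz_shadowing Y g L \<longleftrightarrow>
     (\<exists>\<delta>0>0. \<forall>\<delta>. 0 < \<delta> \<and> \<delta> \<le> \<delta>0 \<longrightarrow>
        (\<forall>x. pseudo_orbit Y g \<delta> x \<longrightarrow> (\<exists>y. shadows Y g (L * \<delta>) x y)))"

definition chain :: "'a::metric_space set \<Rightarrow> ('a \<Rightarrow> 'a) \<Rightarrow> real \<Rightarrow> (nat \<Rightarrow> 'a) \<Rightarrow> nat \<Rightarrow> bool" where
  "chain X f \<delta> x k \<longleftrightarrow> k \<ge> 1 \<and> (\<forall>i\<le>k. x i \<in> X) \<and> (\<forall>i<k. dist (f (x i)) (x (Suc i)) \<le> \<delta>)"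

definition chain_transitive :: "'a::metric_space set \<Rightarrow> ('a \<Rightarrow> 'a) \<Rightarrow> bool" where
  "chain_transitive X f \<longleftrightarrow>
     (\<forall>x\<in>X. \<forall>y\<in>X. \<forall>\<delta>>0. \<exists>c k. chain X f \<delta> c k \<and> c 0 = x \<and> c k = y)"

definition cycle_gcd :: "'a::metric_space set \<Rightarrow> ('a \<Rightarrow> 'a) \<Rightarrow> real \<Rightarrow> nat" where
  "cycle_gcd X f \<delta> = Gcd {k. \<exists>c. chain X f \<delta> c k \<and> c 0 = c k}"

definition sim_delta :: "'a::metric_space set \<Rightarrow> ('a \<Rightarrow> 'a) \<Rightarrow> real \<Rightarrow> 'a \<Rightarrow> 'a \<Rightarrow> bool" where
  "sim_delta X f \<delta> x y \<longleftrightarrow>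
     (\<exists>c k. chain X f \<delta> c k \<and> c 0 = x \<and> c k = y \<and> cycle_gcd X f \<delta> dvd k)"

definition sim_rel :: "'a::metric_space set \<Rightarrow> ('a \<Rightarrow> 'a) \<Rightarrow> ('a \<times> 'a) set" where
  "sim_rel X f = {(x, y). x \<in> X \<and> y \<in> X \<and> (\<forall>\<delta>>0. sim_delta X f \<delta> x y)}"

definition Dclasses :: "'a::metric_space set \<Rightarrow> ('a \<Rightarrow> 'a) \<Rightarrow> 'a set set" where
  "Dclasses X f = X // sim_rel X f"

end

theory Submission
  imports Defs
begin

(*
  Write m(\<delta>) for cycle_gcd. Every \<delta>-cycle is a \<delta>'-cycle for \<delta> \<le> \<delta>', so m(\<delta>') divides m(\<delta>).
  Lipschitz shadowing lets \<delta>' drop below \<delta>: a \<delta>-cycle of length k, run periodically, is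
  shadowed by a point whose orbit is back L\<delta>-close to the start after k steps, which closes up
  to a \<delta>'-cycle through the start once L\<delta> < \<delta>'. So m(\<delta>') divides m(\<delta>) for such \<delta>' as well,
  and since L < 1 this gives m(\<delta>) = m(\<delta>0) for all \<delta> \<le> \<delta>0; thus the relation \<sim> is just the
  relation for \<delta>0. Its classes are those of f x0, ..., f^m x0 with m = m(\<delta>0), each invariant
  under f^m. A pseudo orbit of f^m in a class D, filled in with f-orbit segments, is a pseudo
  orbit of f; its shadowing point starts L\<delta>-close to D and therefore lies in D.
*)

lemma dvd_add_complement_mod:
  assumes "0 < (m::nat)"
  shows "m dvd c + (m - c mod m)"
proof -
  have "c + (m - c mod m) = m * (c div m) + m"
    using mod_less_divisor[OF assms, of c] mult_div_mod_eq[of m c] by linarith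
  then show ?thesis by simp
qed

definition has_chain :: "'a::metric_space set \<Rightarrow> ('a \<Rightarrow> 'a) \<Rightarrow> real \<Rightarrow> 'a \<Rightarrow> 'a \<Rightarrow> nat \<Rightarrow> bool" where
  "has_chain X f \<delta> x y k \<longleftrightarrow> (\<exists>c. chain X f \<delta> c k \<and> c 0 = x \<and> c k = y)"

lemma has_chainD:
  assumes "has_chain X f \<delta> x y k"
  shows "x \<in> X" "y \<in> X" "1 \<le> k"
  using assms unfolding has_chain_def chain_def by auto

lemma has_chain_mono:
  "has_chain X f \<delta> x y k \<Longrightarrow> \<delta> \<le> \<delta>' \<Longrightarrow> has_chain X f \<delta>' x y k"
  unfolding has_chain_def chain_def by force

lemma has_chain_trans:
  assumes "has_chain X f \<delta> x y a" and "has_chain X f \<delta> y z b"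
  shows "has_chain X f \<delta> x z (a + b)"
proof -
  obtain c where c: "chain X f \<delta> c a" "c 0 = x" "c a = y"
    using assms(1) unfolding has_chain_def by blast
  obtain e where e: "chain X f \<delta> e b" "e 0 = y" "e b = z"
    using assms(2) unfolding has_chain_def by blast
  define ce where "ce i = (if i \<le> a then c i else e (i - a))" for i
  have "dist (f (ce i)) (ce (Suc i)) \<le> \<delta>" if "i < a + b" for i
  proof (cases "i < a")
    case True
    then show ?thesis using c(1) unfolding ce_def chain_def by auto
  next
    case False
    then have "Suc i - a = Suc (i - a)" "i - a < b" using \<open>i < a + b\<close> by auto
    then show ?thesis using e c(3) False unfolding ce_def chain_def by auto
  qed
  moreover have "ce i \<in> X" if "i \<le> a + b" for i
    using c(1) e(1) that unfolding ce_def chain_def by auto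
  ultimately have "chain X f \<delta> ce (a + b)"
    using c(1) unfolding chain_def by auto
  moreover have "ce 0 = x" "ce (a + b) = z"
    using c e has_chainD(3)[OF assms(2)] unfolding ce_def by auto
  ultimately show ?thesis unfolding has_chain_def by blast
qed

lemma funpow_mem: "f ` X \<subseteq> X \<Longrightarrow> x \<in> X \<Longrightarrow> (f ^^ n) x \<in> X"
  by (induction n) auto

lemma has_chain_funpow:
  assumes "f ` X \<subseteq> X" "x \<in> X" "1 \<le> k" "0 \<le> \<delta>"
  shows "has_chain X f \<delta> x ((f ^^ k) x) k"
proof -
  have "chain X f \<delta> (\<lambda>i. (f ^^ i) x) k"
    using assms funpow_mem[OF assms(1,2)] unfolding chain_def by auto
  then show ?thesis unfolding has_chain_def by auto
qed

lemma has_chain_move_end: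
  assumes "has_chain X f \<eta> x y k" "z \<in> X" "\<eta> + dist y z \<le> \<delta>"
  shows "has_chain X f \<delta> x z k"
proof -
  obtain c where c: "chain X f \<eta> c k" "c 0 = x" "c k = y"
    using assms(1) unfolding has_chain_def by blast
  have k: "1 \<le> k" using c(1) unfolding chain_def by simp
  define c' where "c' = c(k := z)"
  have "dist (f (c' i)) (c' (Suc i)) \<le> \<delta>" if "i < k" for i
  proof (cases "Suc i = k")
    case True
    have "dist (f (c i)) z \<le> dist (f (c i)) y + dist y z" by (rule dist_triangle)
    also have "\<dots> \<le> \<delta>" using c that True assms(3) unfolding chain_def by fastforce
    finally show ?thesis using True unfolding c'_def by simp
  next
    case False
    have "dist (f (c i)) (c (Suc i)) \<le> \<eta>" using c(1) that unfolding chain_def by simp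
    moreover have "\<eta> \<le> \<delta>" using assms(3) zero_le_dist[of y z] by linarith
    ultimately show ?thesis using False that unfolding c'_def by simp
  qed
  then have "chain X f \<delta> c' k"
    using c(1) assms(2) unfolding chain_def c'_def by auto
  then show ?thesis using c k unfolding has_chain_def c'_def by auto
qed

lemma cycle_gcd_dvd: "has_chain X f \<delta> x x k \<Longrightarrow> cycle_gcd X f \<delta> dvd k"
  unfolding cycle_gcd_def has_chain_def by (rule Gcd_dvd) auto

lemma cycle_gcd_antimono:
  assumes "\<delta> \<le> \<delta>'"
  shows "cycle_gcd X f \<delta>' dvd cycle_gcd X f \<delta>"
proof -
  have "chain X f \<delta>' c k" if "chain X f \<delta> c k" for c k
    using that assms unfolding chain_def by force
  then show ?thesis
    unfolding cycle_gcd_def by (blast intro: Gcd_greatest Gcd_dvd)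
qed

abbreviation sim_delta_rel :: "'a::metric_space set \<Rightarrow> ('a \<Rightarrow> 'a) \<Rightarrow> real \<Rightarrow> ('a \<times> 'a) set" where
  "sim_delta_rel X f \<delta> \<equiv> {(x, y). sim_delta X f \<delta> x y}"

lemma sim_delta_iff:
  "sim_delta X f \<delta> x y \<longleftrightarrow> (\<exists>k. has_chain X f \<delta> x y k \<and> cycle_gcd X f \<delta> dvd k)"
  unfolding sim_delta_def has_chain_def by blast

lemma sim_deltaD: "sim_delta X f \<delta> x y \<Longrightarrow> x \<in> X \<and> y \<in> X"
  unfolding sim_delta_iff by (auto dest: has_chainD)

lemma chain_transitive_iff:
  "chain_transitive X f \<longleftrightarrow> (\<forall>x\<in>X. \<forall>y\<in>X. \<forall>\<delta>>0. \<exists>k. has_chain X f \<delta> x y k)"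
  unfolding chain_transitive_def has_chain_def by (metis (no_types))

lemma pseudo_orbit_cycle:
  assumes "chain X f \<delta> c k" "c 0 = c k"
  shows "pseudo_orbit X f \<delta> (\<lambda>i. c (i mod k))"
  unfolding pseudo_orbit_def
proof (intro conjI allI)
  fix i
  have k: "i mod k < k" using assms(1) unfolding chain_def by simp
  then show "c (i mod k) \<in> X" using assms(1) unfolding chain_def by simp
  have "c (Suc i mod k) = c (Suc (i mod k))"
    using assms(2) by (simp add: mod_Suc)
  then show "dist (f (c (i mod k))) (c (Suc i mod k)) \<le> \<delta>"
    using assms(1) k unfolding chain_def by simp
qed

lemma pseudo_orbit_funpow_unfold:
  assumes "f ` X \<subseteq> X" "Y \<subseteq> X" "0 < n" "pseudo_orbit Y (f ^^ n) \<delta> z"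
  shows "pseudo_orbit X f \<delta> (\<lambda>i. (f ^^ (i mod n)) (z (i div n)))"
  unfolding pseudo_orbit_def
proof (intro conjI allI)
  show "(f ^^ (i mod n)) (z (i div n)) \<in> X" for i
    using assms(2,4) funpow_mem[OF assms(1)] unfolding pseudo_orbit_def by blast
  have step: "dist ((f ^^ n) (z i)) (z (Suc i)) \<le> \<delta>" for i
    using assms(4) unfolding pseudo_orbit_def by simp
  fix i
  show "dist (f ((f ^^ (i mod n)) (z (i div n)))) ((f ^^ (Suc i mod n)) (z (Suc i div n))) \<le> \<delta>"
  proof (cases "Suc (i mod n) = n")
    case True
    then have "Suc i mod n = 0" "Suc i div n = Suc (i div n)"
      by (simp_all add: mod_Suc div_Suc)
    moreover have "f ((f ^^ (i mod n)) (z (i div n))) = (f ^^ n) (z (i div n))"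
      by (subst True[symmetric]) simp
    ultimately show ?thesis using step by simp
  next
    case False
    then have "Suc i mod n = Suc (i mod n)" "Suc i div n = i div n"
      by (simp_all add: mod_Suc div_Suc)
    moreover have "0 \<le> \<delta>"
      using step[of 0] zero_le_dist[of "(f ^^ n) (z 0)" "z (Suc 0)"] by linarith
    ultimately show ?thesis by (simp only: funpow.simps comp_apply dist_self)
  qed
qed

locale chain_transitive_map =
  fixes X :: "'a::metric_space set" and f :: "'a \<Rightarrow> 'a"
  assumes chain_transitive: "chain_transitive X f"
    and maps_into: "f ` X \<subseteq> X"
begin

lemma has_chain_exists:
  assumes "x \<in> X" "y \<in> X" "0 < \<delta>"
  obtains k where "has_chain X f \<delta> x y k"
  using chain_transitive assms unfolding chain_transitive_iff by blast

lemma cycle_gcd_pos: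
  assumes "X \<noteq> {}" "0 < \<delta>"
  shows "0 < cycle_gcd X f \<delta>"
proof -
  obtain x where "x \<in> X" using assms(1) by blast
  then obtain k where k: "has_chain X f \<delta> x x k" using has_chain_exists assms(2) by metis
  then have "cycle_gcd X f \<delta> dvd k" by (rule cycle_gcd_dvd)
  then show ?thesis using has_chainD(3)[OF k] by (metis dvd_0_left_iff gr0I not_one_le_zero)
qed

lemma cycle_gcd_dvd_chain_lengths:
  assumes "0 < \<delta>" "has_chain X f \<delta> x y a" "has_chain X f \<delta> x y b"
    and "cycle_gcd X f \<delta> dvd a"
  shows "cycle_gcd X f \<delta> dvd b"
proof -
  obtain k where k: "has_chain X f \<delta> y x k"
    using has_chain_exists has_chainD(1,2)[OF assms(2)] assms(1) by metis
  have "cycle_gcd X f \<delta> dvd a + k"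
    using has_chain_trans[OF assms(2) k] by (rule cycle_gcd_dvd)
  then have "cycle_gcd X f \<delta> dvd k"
    using assms(4) by (simp add: dvd_add_right_iff)
  moreover have "cycle_gcd X f \<delta> dvd b + k"
    using has_chain_trans[OF assms(3) k] by (rule cycle_gcd_dvd)
  ultimately show ?thesis
    by (simp add: dvd_add_left_iff)
qed

lemma sim_delta_iff_dvd:
  assumes "0 < \<delta>" "has_chain X f \<delta> x y a"
  shows "sim_delta X f \<delta> x y \<longleftrightarrow> cycle_gcd X f \<delta> dvd a"
  using cycle_gcd_dvd_chain_lengths[OF assms(1)] assms(2) unfolding sim_delta_iff by blast

lemma sim_delta_if_dist_less:
  assumes "x \<in> X" "y \<in> X" "dist x y < \<delta>"
  shows "sim_delta X f \<delta> x y"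
proof -
  define \<eta> where "\<eta> = \<delta> - dist x y"
  have "0 < \<eta>" using assms(3) unfolding \<eta>_def by simp
  then obtain k where k: "has_chain X f \<eta> x x k" using has_chain_exists assms(1) by metis
  have "\<eta> \<le> \<delta>" unfolding \<eta>_def by simp
  then have "cycle_gcd X f \<delta> dvd k" using k by (blast intro: cycle_gcd_dvd has_chain_mono)
  moreover have "has_chain X f \<delta> x y k"
    using k assms(2) unfolding \<eta>_def by (rule has_chain_move_end) simp
  ultimately show ?thesis unfolding sim_delta_iff by blast
qed

lemma equiv_sim_delta:
  assumes "0 < \<delta>"
  shows "equiv X (sim_delta_rel X f \<delta>)"
proof (rule equivI)
  show "sim_delta_rel X f \<delta> \<subseteq> X \<times> X"
    by (auto dest: sim_deltaD)
  show "refl_on X (sim_delta_rel X f \<delta>)"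
    using sim_delta_if_dist_less assms by (simp add: refl_on_def)
  show "sym (sim_delta_rel X f \<delta>)"
  proof (rule symI)
    fix x y assume "(x, y) \<in> sim_delta_rel X f \<delta>"
    then obtain a where a: "has_chain X f \<delta> x y a" "cycle_gcd X f \<delta> dvd a"
      unfolding sim_delta_iff by blast
    obtain b where b: "has_chain X f \<delta> y x b"
      using has_chain_exists has_chainD(1,2)[OF a(1)] assms by metis
    have "cycle_gcd X f \<delta> dvd a + b" using has_chain_trans[OF a(1) b] by (rule cycle_gcd_dvd)
    then have "cycle_gcd X f \<delta> dvd b" using a(2) by (simp add: dvd_add_right_iff)
    then show "(y, x) \<in> sim_delta_rel X f \<delta>" using b unfolding sim_delta_iff by blast
  qed
  show "trans (sim_delta_rel X f \<delta>)"
    by (rule transI) (auto simp: sim_delta_iff intro: has_chain_trans)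
qed

lemma sim_delta_funpow_cycle_gcd:
  assumes "x \<in> X" "0 < \<delta>"
  shows "sim_delta X f \<delta> x ((f ^^ cycle_gcd X f \<delta>) x)"
proof -
  have "1 \<le> cycle_gcd X f \<delta>" using cycle_gcd_pos assms by fastforce
  then have "has_chain X f \<delta> x ((f ^^ cycle_gcd X f \<delta>) x) (cycle_gcd X f \<delta>)"
    using has_chain_funpow[OF maps_into assms(1) _, of _ \<delta>] assms(2) by simp
  then show ?thesis by (simp add: sim_delta_iff_dvd[OF assms(2)])
qed

lemma quotient_sim_delta_eq:
  assumes "x0 \<in> X" "0 < \<delta>"
  shows "X // sim_delta_rel X f \<delta> = (\<lambda>j. sim_delta_rel X f \<delta> `` {(f ^^ j) x0}) ` {1..cycle_gcd X f \<delta>}"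
proof -
  let ?m = "cycle_gcd X f \<delta>"
  have "\<exists>j\<in>{1..?m}. sim_delta X f \<delta> x ((f ^^ j) x0)" if x: "x \<in> X" for x
  proof -
    obtain c where c: "has_chain X f \<delta> x x0 c" using has_chain_exists[OF x assms] by blast
    define j where "j = ?m - c mod ?m"
    have m: "0 < ?m" using cycle_gcd_pos assms by blast
    then have j: "j \<in> {1..?m}" unfolding j_def using mod_less_divisor[OF m, of c] by simp
    then have "has_chain X f \<delta> x ((f ^^ j) x0) (c + j)"
      using has_chain_trans[OF c has_chain_funpow[OF maps_into assms(1)]] assms by simp
    moreover have "?m dvd c + j"
      unfolding j_def using m by (rule dvd_add_complement_mod)
    ultimately show ?thesis using j sim_delta_iff_dvd assms(2) by blast
  qed
  then have "sim_delta_rel X f \<delta> `` {x} \<in> (\<lambda>j. sim_delta_rel X f \<delta> `` {(f ^^ j) x0}) ` {1..?m}"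
    if "x \<in> X" for x
    using equiv_class_eq[OF equiv_sim_delta[OF assms(2)]] that by blast
  moreover have "(\<lambda>j. sim_delta_rel X f \<delta> `` {(f ^^ j) x0}) ` {1..?m} \<subseteq> X // sim_delta_rel X f \<delta>"
    using funpow_mem[OF maps_into assms(1)] by (blast intro: quotientI)
  ultimately show ?thesis
    by (blast elim: quotientE)
qed

lemma not_sim_delta_funpow:
  assumes "x \<in> X" "0 < \<delta>" "i < j" "j - i < cycle_gcd X f \<delta>"
  shows "\<not> sim_delta X f \<delta> ((f ^^ i) x) ((f ^^ j) x)"
proof -
  have "(f ^^ (j - i)) ((f ^^ i) x) = (f ^^ (j - i + i)) x"
    by (simp add: funpow_add)
  then have "(f ^^ (j - i)) ((f ^^ i) x) = (f ^^ j) x"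
    using assms(3) by simp
  then have "has_chain X f \<delta> ((f ^^ i) x) ((f ^^ j) x) (j - i)"
    using has_chain_funpow[OF maps_into funpow_mem[OF maps_into assms(1)], of "j - i" \<delta> i] assms(2,3)
    by simp
  moreover have "\<not> cycle_gcd X f \<delta> dvd j - i"
    using assms(3,4) by (auto dest: dvd_imp_le)
  ultimately show ?thesis using sim_delta_iff_dvd[OF assms(2)] by blast
qed

lemma card_quotient_sim_delta:
  assumes "X \<noteq> {}" "0 < \<delta>"
  shows "card (X // sim_delta_rel X f \<delta>) = cycle_gcd X f \<delta>"
proof -
  let ?R = "sim_delta_rel X f \<delta>" and ?m = "cycle_gcd X f \<delta>"
  obtain x0 where x0: "x0 \<in> X" using assms(1) by blast
  have "inj_on (\<lambda>j. ?R `` {(f ^^ j) x0}) {1..?m}"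
  proof (rule inj_onI)
    fix i j assume ij: "i \<in> {1..?m}" "j \<in> {1..?m}" and eq: "?R `` {(f ^^ i) x0} = ?R `` {(f ^^ j) x0}"
    have "((f ^^ i) x0, (f ^^ j) x0) \<in> ?R" "((f ^^ j) x0, (f ^^ i) x0) \<in> ?R"
      using eq eq_equiv_class_iff[OF equiv_sim_delta[OF assms(2)]] funpow_mem[OF maps_into x0] by blast+
    moreover have "j - i < ?m" "i - j < ?m" using ij by auto
    ultimately show "i = j"
      using not_sim_delta_funpow[OF x0 assms(2), of i j] not_sim_delta_funpow[OF x0 assms(2), of j i] ij
      by (cases i j rule: linorder_cases) auto
  qed
  then show ?thesis
    using quotient_sim_delta_eq[OF x0 assms(2)] by (simp add: card_image)
qed

end

definition lipschitz_shadowing_upto :: "'a::metric_space set \<Rightarrow> ('a \<Rightarrow> 'a) \<Rightarrow> real \<Rightarrow> real \<Rightarrow> bool" where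
  "lipschitz_shadowing_upto Y g L \<delta>0 \<longleftrightarrow>
     (\<forall>\<delta>. 0 < \<delta> \<and> \<delta> \<le> \<delta>0 \<longrightarrow> (\<forall>x. pseudo_orbit Y g \<delta> x \<longrightarrow> (\<exists>y. shadows Y g (L * \<delta>) x y)))"

lemma lipschitz_shadowing_iff:
  "lipschitz_shadowing Y g L \<longleftrightarrow> (\<exists>\<delta>0>0. lipschitz_shadowing_upto Y g L \<delta>0)"
  unfolding lipschitz_shadowing_def lipschitz_shadowing_upto_def by blast

locale chain_transitive_lipschitz_shadowing = chain_transitive_map +
  fixes L \<delta>0 :: real
  assumes L_pos: "0 < L" and L_less_1: "L < 1" and \<delta>0_pos: "0 < \<delta>0"
    and shadowing: "lipschitz_shadowing_upto X f L \<delta>0"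
begin

lemma shadowingE:
  assumes "0 < \<delta>" "\<delta> \<le> \<delta>0" "pseudo_orbit X f \<delta> z"
  obtains y where "y \<in> X" "\<And>i. dist ((f ^^ i) y) (z i) \<le> L * \<delta>"
  using shadowing assms unfolding lipschitz_shadowing_upto_def shadows_def by blast

lemma cycle_gcd_dvd_if_shadowed:
  assumes "0 < \<delta>" "\<delta> \<le> \<delta>0" "L * \<delta> < \<delta>'"
  shows "cycle_gcd X f \<delta>' dvd cycle_gcd X f \<delta>"
  unfolding cycle_gcd_def[of X f \<delta>]
proof (rule Gcd_greatest)
  fix k assume "k \<in> {k. \<exists>c. chain X f \<delta> c k \<and> c 0 = c k}"
  then obtain c where c: "chain X f \<delta> c k" "c 0 = c k" by blast
  have k: "0 < k" using c(1) unfolding chain_def by simp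
  obtain y where y: "y \<in> X" "\<And>i. dist ((f ^^ i) y) (c (i mod k)) \<le> L * \<delta>"
    using shadowingE[OF assms(1,2) pseudo_orbit_cycle[OF c]] by blast
  have x0: "c 0 \<in> X" using c(1) unfolding chain_def by simp
  have "dist (c 0) y < \<delta>'" using y(2)[of 0] assms(3) by (simp add: dist_commute)
  then obtain a where a: "has_chain X f \<delta>' (c 0) y a" "cycle_gcd X f \<delta>' dvd a"
    using sim_delta_if_dist_less[OF x0 y(1)] unfolding sim_delta_iff by blast
  have "has_chain X f 0 y ((f ^^ k) y) k"
    using has_chain_funpow[OF maps_into y(1)] k by simp
  moreover have "0 + dist ((f ^^ k) y) (c 0) \<le> \<delta>'"
    using y(2)[of k] assms(3) by simp
  ultimately have "has_chain X f \<delta>' y (c 0) k"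
    by (rule has_chain_move_end[OF _ x0])
  then have "cycle_gcd X f \<delta>' dvd a + k"
    using has_chain_trans[OF a(1)] cycle_gcd_dvd by blast
  then show "cycle_gcd X f \<delta>' dvd k"
    using a(2) by (simp add: dvd_add_right_iff)
qed

lemma cycle_gcd_dvd_cycle_gcd_base:
  assumes "0 < \<delta>"
  shows "cycle_gcd X f \<delta> dvd cycle_gcd X f \<delta>0"
proof -
  \<comment> \<open>The scales q^n \<delta>0 with L < q < 1 reach below \<delta>, and consecutive ones are linked by
    the previous lemma.\<close>
  define q where "q = (1 + L) / 2"
  have q: "L < q" "q < 1" "0 < q" using L_pos L_less_1 unfolding q_def by auto
  have "cycle_gcd X f \<delta> dvd cycle_gcd X f \<delta>0" if "q ^ n * \<delta>0 \<le> \<delta>" for n \<delta>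
    using that
  proof (induction n arbitrary: \<delta>)
    case 0
    then show ?case by (simp add: cycle_gcd_antimono)
  next
    case (Suc n)
    define e where "e = q ^ n * \<delta>0"
    have e: "0 < e" "e \<le> \<delta>0"
      unfolding e_def using q \<delta>0_pos power_le_one[of q n] by (auto simp: mult_le_cancel_right1)
    have "L * e < q * e" using q(1) e(1) by simp
    also have "\<dots> \<le> \<delta>" using Suc.prems unfolding e_def by simp
    finally have "cycle_gcd X f \<delta> dvd cycle_gcd X f e"
      using cycle_gcd_dvd_if_shadowed e by blast
    also have "cycle_gcd X f e dvd cycle_gcd X f \<delta>0"
      using Suc.IH unfolding e_def by simp
    finally show ?case .
  qed
  moreover obtain n where "q ^ n < \<delta> / \<delta>0"
    using real_arch_pow_inv[of "\<delta> / \<delta>0" q] q assms \<delta>0_pos by auto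
  then have "q ^ n * \<delta>0 \<le> \<delta>"
    using \<delta>0_pos by (simp add: pos_less_divide_eq less_imp_le)
  ultimately show ?thesis by blast
qed

lemma sim_rel_eq: "sim_rel X f = sim_delta_rel X f \<delta>0"
proof -
  have "sim_delta X f \<delta> x y" if xy: "sim_delta X f \<delta>0 x y" and \<delta>: "0 < \<delta>" for x y \<delta>
  proof -
    obtain b where b: "has_chain X f (min \<delta> \<delta>0) x y b"
      using has_chain_exists sim_deltaD[OF xy] \<delta> \<delta>0_pos by (metis min_less_iff_conj)
    have "has_chain X f \<delta>0 x y b" using has_chain_mono[OF b] by simp
    then have "cycle_gcd X f \<delta>0 dvd b"
      using xy sim_delta_iff_dvd[OF \<delta>0_pos] by blast
    then have "cycle_gcd X f \<delta> dvd b"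
      using cycle_gcd_dvd_cycle_gcd_base[OF \<delta>] by (rule dvd_trans[rotated])
    moreover have "has_chain X f \<delta> x y b" using has_chain_mono[OF b] by simp
    ultimately show ?thesis
      unfolding sim_delta_iff by blast
  qed
  then show ?thesis
    unfolding sim_rel_def using \<delta>0_pos by (auto dest: sim_deltaD)
qed

lemma Dclasses_eq: "Dclasses X f = X // sim_delta_rel X f \<delta>0"
  unfolding Dclasses_def sim_rel_eq ..

lemma funpow_cycle_gcd_Dclass_subset:
  assumes "D \<in> Dclasses X f"
  shows "(f ^^ cycle_gcd X f \<delta>0) ` D \<subseteq> D"
proof -
  have "D \<subseteq> X"
    using in_quotient_imp_subset[OF equiv_sim_delta[OF \<delta>0_pos]] assms Dclasses_eq by blast
  then show ?thesis
    using in_quotient_imp_closed[OF equiv_sim_delta[OF \<delta>0_pos]] assms Dclasses_eq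
      sim_delta_funpow_cycle_gcd[OF _ \<delta>0_pos] by blast
qed

lemma lipschitz_shadowing_upto_Dclass:
  assumes "D \<in> Dclasses X f"
  shows "lipschitz_shadowing_upto D (f ^^ cycle_gcd X f \<delta>0) L \<delta>0"
  unfolding lipschitz_shadowing_upto_def shadows_def
proof (intro allI impI)
  let ?m = "cycle_gcd X f \<delta>0"
  fix \<delta> z assume "0 < \<delta> \<and> \<delta> \<le> \<delta>0" and z: "pseudo_orbit D (f ^^ ?m) \<delta> z"
  then have \<delta>: "0 < \<delta>" "\<delta> \<le> \<delta>0" by auto
  have D: "D \<in> X // sim_delta_rel X f \<delta>0" using assms Dclasses_eq by simp
  have DX: "D \<subseteq> X" using in_quotient_imp_subset[OF equiv_sim_delta[OF \<delta>0_pos] D] .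
  have "X \<noteq> {}" using DX in_quotient_imp_non_empty[OF equiv_sim_delta[OF \<delta>0_pos] D] by blast
  then have m: "0 < ?m" using cycle_gcd_pos \<delta>0_pos by blast
  obtain y where y: "y \<in> X"
    and shadow: "\<And>i. dist ((f ^^ i) y) ((f ^^ (i mod ?m)) (z (i div ?m))) \<le> L * \<delta>"
    using shadowingE[OF \<delta> pseudo_orbit_funpow_unfold[OF maps_into DX m z]] by blast
  have shadow_z: "dist (((f ^^ ?m) ^^ i) y) (z i) \<le> L * \<delta>" for i
    using shadow[of "?m * i"] m by (simp add: funpow_mult)
  have z0: "z 0 \<in> D" using z unfolding pseudo_orbit_def by blast
  have "L * \<delta> < \<delta>0"
    using mult_strict_right_mono[OF L_less_1 \<delta>(1)] \<delta>(2) by linarith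
  then have "dist (z 0) y < \<delta>0" using shadow_z[of 0] by (simp add: dist_commute)
  then have "sim_delta X f \<delta>0 (z 0) y"
    using sim_delta_if_dist_less y DX z0 by blast
  then have "y \<in> D"
    using in_quotient_imp_closed[OF equiv_sim_delta[OF \<delta>0_pos] D z0] by blast
  then show "\<exists>y. y \<in> D \<and> (\<forall>i. dist (((f ^^ ?m) ^^ i) y) (z i) \<le> L * \<delta>)"
    using shadow_z by blast
qed

end

theorem theorem1p9:
  fixes X :: "'a::metric_space set" and f :: "'a \<Rightarrow> 'a" and L :: real
  assumes "compact X"
    and "0 < L" and "L < 1"
    and "continuous_on X f" and "f ` X \<subseteq> X"
    and "chain_transitive X f"
    and "lipschitz_shadowing X f L"
  shows "finite (Dclasses X f) \<and>
         (\<forall>D\<in>Dclasses X f.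
            (f ^^ card (Dclasses X f)) ` D \<subseteq> D \<and>
            lipschitz_shadowing D (f ^^ card (Dclasses X f)) L)"
proof -
  obtain \<delta>0 where \<delta>0: "0 < \<delta>0" "lipschitz_shadowing_upto X f L \<delta>0"
    using assms(7) unfolding lipschitz_shadowing_iff by blast
  interpret chain_transitive_lipschitz_shadowing X f L \<delta>0
    using assms(2,3,5,6) \<delta>0 by unfold_locales
  show ?thesis
  proof (cases "X = {}")
    case True
    then show ?thesis by (simp add: Dclasses_def)
  next
    case False
    then have card: "card (Dclasses X f) = cycle_gcd X f \<delta>0"
      using card_quotient_sim_delta \<delta>0_pos Dclasses_eq by simp
    then have "finite (Dclasses X f)"
      using cycle_gcd_pos[OF False \<delta>0_pos] by (simp add: card_ge_0_finite)
    then show ?thesis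
      unfolding card lipschitz_shadowing_iff
      using funpow_cycle_gcd_Dclass_subset lipschitz_shadowing_upto_Dclass \<delta>0_pos by blast
  qed
qed

end
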